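(* Let $m\ge 2$ inputs have positive sizes $w_1,\dots,w_m$ with $s=\sum_{i=1}^m w_i$, and let $q>0$ be the reducer capacity. Then every A2A mapping schema for these inputs with capacity $q$ has communication cost at least $\frac{s^2}{q}$ and uses at least $\frac{s^2}{q^2}$ reducers.
   Context: An A2A mapping schema for inputs $i_1,\dots,i_m$ with sizes $w_1,\dots,w_m$ and capacity $q$ is an assignment of the inputs to a collection of reducers (each input may be assigned to several reducers) such that (1) every reducer is assigned inputs whose total size is at most $q$, and (2) every pair of distinct inputs is assigned together to at least one reducer. The communication cost of a mapping schema is the sum, over all reducers, of the total size of the inputs assigned to that reducer (equivalently $\sum_i w_i\cdot r_i$, where $r_i$ is the number of reducers input $i$ is assigned to). *)

theory Defs
  imports Main "HOL.Real"
begin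

text \<open>A mapping schema is given as a
list of reducers, each reducer being the set of inputs assigned to it
(a list, so that several reducers may receive the same inputs).\<close>

definition reducer_load :: "(nat \<Rightarrow> real) \<Rightarrow> nat set \<Rightarrow> real" where
  "reducer_load w R = (\<Sum>i\<in>R. w i)"

definition is_A2A_mapping_schema ::
  "nat \<Rightarrow> (nat \<Rightarrow> real) \<Rightarrow> real \<Rightarrow> nat set list \<Rightarrow> bool" where
  "is_A2A_mapping_schema m w q rs \<longleftrightarrow>
     (\<forall>R\<in>set rs. R \<subseteq> {1..m} \<and> reducer_load w R \<le> q) \<and>
     (\<forall>i\<in>{1..m}. \<forall>j\<in>{1..m}. i \<noteq> j \<longrightarrow> (\<exists>R\<in>set rs. i \<in> R \<and> j \<in> R))"

definition communication_cost :: "(nat \<Rightarrow> real) \<Rightarrow> nat set list \<Rightarrow> real" where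
  "communication_cost w rs = (\<Sum>R\<leftarrow>rs. reducer_load w R)"

end

theory Submission
  imports Defs
begin

text \<open>Let s be the total size and L k the load of reducer k. An input i meets every
other input in some reducer containing i, so the reducers containing i carry total load at
least s. Weighting by w i and counting incidences of inputs and reducers twice gives
s^2 \<le> \<Sum> L k^2 \<le> q \<Sum> L k (sums over all reducers), the cost bound; the bound on
the number of reducers follows because the cost is at most q times that number.\<close>

lemma sum_le_sum_over_cover:
  fixes w :: "'a \<Rightarrow> 'b::{semiring_1, ordered_comm_monoid_add}"
  assumes "finite S" "finite K"
    and "\<And>k. k \<in> K \<Longrightarrow> R k \<subseteq> S"
    and "\<And>j. j \<in> S \<Longrightarrow> \<exists>k\<in>K. j \<in> R k"
    and "\<And>j. j \<in> S \<Longrightarrow> w j \<ge> 0"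
  shows "(\<Sum>j\<in>S. w j) \<le> (\<Sum>k\<in>K. \<Sum>j\<in>R k. w j)"
proof -
  have "(\<Sum>j\<in>S. w j) \<le> (\<Sum>j\<in>S. \<Sum>k\<in>{k\<in>K. j \<in> R k}. w j)"
  proof (rule sum_mono)
    fix j assume "j \<in> S"
    then obtain k where "k \<in> K" "j \<in> R k" using assms(4) by blast
    then show "w j \<le> (\<Sum>k\<in>{k\<in>K. j \<in> R k}. w j)"
      using assms(2,5) \<open>j \<in> S\<close>
      by (intro member_le_sum[where i = k and f = "\<lambda>_. w j"]) auto
  qed
  also have "\<dots> = (\<Sum>k\<in>K. \<Sum>j\<in>{j\<in>S. j \<in> R k}. w j)"
    by (rule sum.swap_restrict[OF assms(1,2)])
  also have "\<dots> = (\<Sum>k\<in>K. \<Sum>j\<in>R k. w j)"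
    using assms(3) by (intro sum.cong) (auto intro: arg_cong[where f = "\<lambda>A. sum w A"])
  finally show ?thesis .
qed

lemma sum_weighted_incidence:
  fixes w g :: "_ \<Rightarrow> 'b::comm_semiring_0"
  assumes "finite S" "finite K" and "\<And>k. k \<in> K \<Longrightarrow> R k \<subseteq> S"
  shows "(\<Sum>i\<in>S. w i * (\<Sum>k\<in>{k\<in>K. i \<in> R k}. g k)) = (\<Sum>k\<in>K. g k * (\<Sum>i\<in>R k. w i))"
proof -
  have "(\<Sum>i\<in>S. w i * (\<Sum>k\<in>{k\<in>K. i \<in> R k}. g k))
      = (\<Sum>k\<in>K. \<Sum>i\<in>{i\<in>S. i \<in> R k}. w i * g k)"
    by (simp add: sum_distrib_left sum.swap_restrict[OF assms(1,2)])
  also have "\<dots> = (\<Sum>k\<in>K. g k * (\<Sum>i\<in>R k. w i))"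
  proof (rule sum.cong)
    fix k assume "k \<in> K"
    then have "{i\<in>S. i \<in> R k} = R k" using assms(3) by auto
    then show "(\<Sum>i\<in>{i\<in>S. i \<in> R k}. w i * g k) = g k * (\<Sum>i\<in>R k. w i)"
      by (simp add: sum_distrib_left mult.commute)
  qed simp
  finally show ?thesis .
qed

lemma square_sum_le_capacity_times_total_load:
  fixes w :: "'a \<Rightarrow> 'b::linordered_idom"
  assumes "finite S" "finite K"
    and blocks: "\<And>k. k \<in> K \<Longrightarrow> R k \<subseteq> S"
    and load: "\<And>k. k \<in> K \<Longrightarrow> (\<Sum>i\<in>R k. w i) \<le> q"
    and pairs: "\<And>i j. i \<in> S \<Longrightarrow> j \<in> S \<Longrightarrow> i \<noteq> j \<Longrightarrow> \<exists>k\<in>K. i \<in> R k \<and> j \<in> R k"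
    and nontrivial: "\<And>i. i \<in> S \<Longrightarrow> \<exists>j\<in>S. j \<noteq> i"
    and nonneg: "\<And>i. i \<in> S \<Longrightarrow> w i \<ge> 0"
  shows "(\<Sum>i\<in>S. w i)\<^sup>2 \<le> q * (\<Sum>k\<in>K. \<Sum>i\<in>R k. w i)"
proof -
  define s where "s = (\<Sum>i\<in>S. w i)"
  define L where "L k = (\<Sum>i\<in>R k. w i)" for k
  have L_nonneg: "L k \<ge> 0" if "k \<in> K" for k
    unfolding L_def using blocks[OF that] nonneg by (intro sum_nonneg) auto
  have load_at_input: "s \<le> (\<Sum>k\<in>{k\<in>K. i \<in> R k}. L k)" if "i \<in> S" for i
    unfolding s_def L_def
  proof (rule sum_le_sum_over_cover)
    fix j assume "j \<in> S"
    obtain j' where "j' \<in> S" "j' \<noteq> i" using nontrivial \<open>i \<in> S\<close> by blast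
    then show "\<exists>k\<in>{k\<in>K. i \<in> R k}. j \<in> R k"
      using pairs[OF \<open>i \<in> S\<close>] \<open>j \<in> S\<close> by (cases "j = i") blast+
  qed (use assms in auto)
  have "s\<^sup>2 = (\<Sum>i\<in>S. w i * s)"
    by (simp add: s_def power2_eq_square sum_distrib_right)
  also have "\<dots> \<le> (\<Sum>i\<in>S. w i * (\<Sum>k\<in>{k\<in>K. i \<in> R k}. L k))"
    using load_at_input nonneg by (intro sum_mono mult_left_mono) auto
  also have "\<dots> = (\<Sum>k\<in>K. L k * L k)"
    by (simp add: sum_weighted_incidence[OF assms(1-3)] L_def)
  also have "\<dots> \<le> (\<Sum>k\<in>K. q * L k)"
    using load L_nonneg by (intro sum_mono mult_right_mono) (auto simp: L_def)
  finally show ?thesis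
    by (simp add: s_def L_def sum_distrib_left)
qed

lemma communication_cost_eq_sum_nth:
  "communication_cost w rs = (\<Sum>k<length rs. reducer_load w (rs ! k))"
  by (simp add: communication_cost_def sum_list_sum_nth atLeast0LessThan)

lemma A2A_square_size_le_capacity_times_cost:
  assumes "m \<ge> 2" and "\<And>i. i \<in> {1..m} \<Longrightarrow> w i \<ge> 0"
    and "is_A2A_mapping_schema m w q rs"
  shows "(\<Sum>i=1..m. w i)\<^sup>2 \<le> q * communication_cost w rs"
  unfolding communication_cost_eq_sum_nth reducer_load_def
proof (rule square_sum_le_capacity_times_total_load)
  have "rs ! k \<subseteq> {1..m} \<and> reducer_load w (rs ! k) \<le> q" if "k < length rs" for k
    using assms(3) that nth_mem by (auto simp: is_A2A_mapping_schema_def)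
  then show "rs ! k \<subseteq> {1..m}" "(\<Sum>i\<in>rs ! k. w i) \<le> q" if "k \<in> {..<length rs}" for k
    using that by (auto simp: reducer_load_def)
  show "\<exists>k\<in>{..<length rs}. i \<in> rs ! k \<and> j \<in> rs ! k"
    if "i \<in> {1..m}" "j \<in> {1..m}" "i \<noteq> j" for i j
    using assms(3) that unfolding is_A2A_mapping_schema_def by (metis in_set_conv_nth lessThan_iff)
  show "\<exists>j\<in>{1..m}. j \<noteq> i" if "i \<in> {1..m}" for i
    using \<open>m \<ge> 2\<close> by (cases "i = 1") (auto intro: bexI[where x = 1] bexI[where x = 2])
qed (use assms(2) in auto)

lemma A2A_communication_cost_le_capacity_times_length:
  assumes "is_A2A_mapping_schema m w q rs"
  shows "communication_cost w rs \<le> real (length rs) * q"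
proof -
  have "communication_cost w rs \<le> (\<Sum>k<length rs. q)"
    unfolding communication_cost_eq_sum_nth
    using assms by (intro sum_mono) (auto simp: is_A2A_mapping_schema_def)
  then show ?thesis by simp
qed

theorem theorem3:
  fixes m :: nat and w :: "nat \<Rightarrow> real" and q :: real and rs :: "nat set list"
  assumes "m \<ge> 2"
    and "\<And>i. i \<in> {1..m} \<Longrightarrow> w i > 0"
    and "q > 0"
    and "is_A2A_mapping_schema m w q rs"
  shows "communication_cost w rs \<ge> (\<Sum>i=1..m. w i)^2 / q
       \<and> real (length rs) \<ge> (\<Sum>i=1..m. w i)^2 / q^2"
proof -
  let ?s = "\<Sum>i=1..m. w i"
  have cost: "?s\<^sup>2 \<le> q * communication_cost w rs"
    using assms by (intro A2A_square_size_le_capacity_times_cost) (auto intro: less_imp_le)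
  also have "\<dots> \<le> q * (real (length rs) * q)"
    using A2A_communication_cost_le_capacity_times_length[OF assms(4)] \<open>q > 0\<close> by simp
  finally have "?s\<^sup>2 \<le> real (length rs) * q\<^sup>2"
    by (simp add: power2_eq_square mult_ac)
  with cost \<open>q > 0\<close> show ?thesis
    by (simp add: pos_divide_le_eq mult.commute)
qed

end
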